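(* Let $G$ be a connected graph with $|V(G)|\geq 3$. The following are equivalent: (a) $G$ is a complete graph; (b) $\chi(\mathcal{R}(G))=2$; (c) $\mathcal{R}(G)$ contains no cycle of length $5$.
   Context: For a connected graph $G$, a search tree on $G$ is a rooted tree with vertex set $V(G)$ defined recursively: its root is some vertex $r\in V(G)$, and the children of $r$ are the roots of search trees on the connected components of $G-r$. For a rooted tree $T$ and $w\in V(T)$, $T|w$ denotes the subtree rooted at $w$. Let $T$ be a search tree on $G$, let $v$ be a child of $u$ in $T$, and let $p$ be the parent of $u$ (if it exists). The $uv$-rotation transforms $T$ into the search tree $T'$ in which: $u$ is a child of $v$ and $v$ is a child of $p$ (or $v$ is the root if $u$ was the root); every subtree of $u$ in $T$ other than $T|v$ is a subtree of $u$ in $T'$; and every subtree $S$ of $v$ in $T$ is a subtree of $u$ in $T'$ if $u$ is adjacent in $G$ to some vertex of $S$, and a subtree of $v$ in $T'$ otherwise. The rotation graph $\mathcal{R}(G)$ is the graph whose vertices are the search trees on $G$, two being adjacent iff they differ by one rotation. $\chi$ denotes chromatic number. *)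

theory Defs
  imports Main
begin

definition simple_graph :: "'a set \<Rightarrow> ('a \<Rightarrow> 'a \<Rightarrow> bool) \<Rightarrow> bool" where
  "simple_graph V E \<longleftrightarrow> finite V \<and> (\<forall>x y. E x y \<longrightarrow> x \<in> V \<and> y \<in> V)
     \<and> (\<forall>x y. E x y \<longrightarrow> E y x) \<and> (\<forall>x. \<not> E x x)"

definition rel_in :: "('a \<Rightarrow> 'a \<Rightarrow> bool) \<Rightarrow> 'a set \<Rightarrow> ('a \<times> 'a) set" where
  "rel_in E S = {(x, y). x \<in> S \<and> y \<in> S \<and> E x y}"

definition connected_in :: "('a \<Rightarrow> 'a \<Rightarrow> bool) \<Rightarrow> 'a set \<Rightarrow> bool" where
  "connected_in E S \<longleftrightarrow> S \<noteq> {} \<and> (\<forall>x\<in>S. \<forall>y\<in>S. (x, y) \<in> (rel_in E S)\<^sup>*)"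

definition comps :: "('a \<Rightarrow> 'a \<Rightarrow> bool) \<Rightarrow> 'a set \<Rightarrow> 'a set set" where
  "comps E S = (\<lambda>x. {y \<in> S. (x, y) \<in> (rel_in E S)\<^sup>*}) ` S"

definition complete_graph :: "'a set \<Rightarrow> ('a \<Rightarrow> 'a \<Rightarrow> bool) \<Rightarrow> bool" where
  "complete_graph V E \<longleftrightarrow> (\<forall>x\<in>V. \<forall>y\<in>V. x \<noteq> y \<longrightarrow> E x y)"

text \<open>Rooted trees are represented by parent functions p: p x = Some y means y is the parent
  of x; the root (and every non-vertex) has p x = None.
  st E S q p: p restricted to S describes a search tree on G[S] whose root has parent q.\<close>

inductive st :: "('a \<Rightarrow> 'a \<Rightarrow> bool) \<Rightarrow> 'a set \<Rightarrow> 'a option \<Rightarrow> ('a \<Rightarrow> 'a option) \<Rightarrow> bool"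
  for E where
  node: "r \<in> S \<Longrightarrow> p r = q \<Longrightarrow> (\<forall>C\<in>comps E (S - {r}). st E C (Some r) p) \<Longrightarrow> st E S q p"

definition search_tree :: "'a set \<Rightarrow> ('a \<Rightarrow> 'a \<Rightarrow> bool) \<Rightarrow> ('a \<Rightarrow> 'a option) \<Rightarrow> bool" where
  "search_tree V E p \<longleftrightarrow> st E V None p \<and> (\<forall>x. x \<notin> V \<longrightarrow> p x = None)"

definition subtree :: "('a \<Rightarrow> 'a option) \<Rightarrow> 'a \<Rightarrow> 'a set" where
  "subtree p w = {x. (x, w) \<in> {(a, b). p a = Some b}\<^sup>*}"

definition rotate :: "('a \<Rightarrow> 'a \<Rightarrow> bool) \<Rightarrow> ('a \<Rightarrow> 'a option) \<Rightarrow> 'a \<Rightarrow> 'a \<Rightarrow> ('a \<Rightarrow> 'a option)" where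
  "rotate E p u v = (\<lambda>x.
     if x = u then Some v
     else if x = v then p u
     else if p x = Some v then (if \<exists>y\<in>subtree p x. E u y then Some u else Some v)
     else p x)"

definition rotation_step :: "('a \<Rightarrow> 'a \<Rightarrow> bool) \<Rightarrow> ('a \<Rightarrow> 'a option) \<Rightarrow> ('a \<Rightarrow> 'a option) \<Rightarrow> bool" where
  "rotation_step E p p' \<longleftrightarrow> (\<exists>u v. p v = Some u \<and> p' = rotate E p u v)"

definition rot_vertices :: "'a set \<Rightarrow> ('a \<Rightarrow> 'a \<Rightarrow> bool) \<Rightarrow> ('a \<Rightarrow> 'a option) set" where
  "rot_vertices V E = {p. search_tree V E p}"

definition rot_adj :: "('a \<Rightarrow> 'a \<Rightarrow> bool) \<Rightarrow> ('a \<Rightarrow> 'a option) \<Rightarrow> ('a \<Rightarrow> 'a option) \<Rightarrow> bool" where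
  "rot_adj E p p' \<longleftrightarrow> p \<noteq> p' \<and> (rotation_step E p p' \<or> rotation_step E p' p)"

definition chromatic_number :: "'b set \<Rightarrow> ('b \<Rightarrow> 'b \<Rightarrow> bool) \<Rightarrow> nat" where
  "chromatic_number X R = (LEAST k. \<exists>c :: 'b \<Rightarrow> nat.
      (\<forall>x\<in>X. c x < k) \<and> (\<forall>x\<in>X. \<forall>y\<in>X. R x y \<longrightarrow> c x \<noteq> c y))"

definition has_cycle :: "'b set \<Rightarrow> ('b \<Rightarrow> 'b \<Rightarrow> bool) \<Rightarrow> nat \<Rightarrow> bool" where
  "has_cycle X R k \<longleftrightarrow> (\<exists>xs. length xs = k \<and> distinct xs \<and> set xs \<subseteq> X
      \<and> (\<forall>i<k. R (xs ! i) (xs ! ((i + 1) mod k))))"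

end

theory Submission
  imports Defs
begin

text \<open>If G is complete, every search tree is a path, i.e. an ordering of V, and a rotation
  swaps two consecutive vertices of it. The parity of the number of inversions of the ordering is
  then a proper 2-colouring of R(G), and R(G) has an edge, so its chromatic number is 2 and it has
  no odd cycle. If G is connected but not complete, it contains an induced path x - y - z, whose
  five search trees form a 5-cycle in the rotation graph. Making a non-cut vertex w the new root
  embeds R(G - w) into R(G), so repeatedly adding vertices carries this 5-cycle into R(G), whose
  chromatic number is therefore at least 3.\<close>

section \<open>Colourings and odd cycles\<close>

definition colouring :: "'b set \<Rightarrow> ('b \<Rightarrow> 'b \<Rightarrow> bool) \<Rightarrow> nat \<Rightarrow> ('b \<Rightarrow> nat) \<Rightarrow> bool" where
  "colouring X R k c \<longleftrightarrow> (\<forall>x\<in>X. c x < k) \<and> (\<forall>x\<in>X. \<forall>y\<in>X. R x y \<longrightarrow> c x \<noteq> c y)"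

lemma chromatic_number_colouring:
  assumes "finite X" "\<And>x. x \<in> X \<Longrightarrow> \<not> R x x"
  shows "\<exists>c. colouring X R (chromatic_number X R) c"
proof -
  obtain f n where f: "f ` X = {i::nat. i < n}" "inj_on f X"
    using finite_imp_inj_to_nat_seg[OF assms(1)] by blast
  then have "colouring X R n f"
    unfolding colouring_def using assms(2) by (auto dest: inj_onD)
  then have "\<exists>k c. colouring X R k c" by blast
  from LeastI_ex[OF this] show ?thesis
    unfolding chromatic_number_def colouring_def .
qed

lemma chromatic_number_eq_2:
  assumes "colouring X R 2 c" "x \<in> X" "y \<in> X" "R x y"
  shows "chromatic_number X R = 2"
  unfolding chromatic_number_def colouring_def[symmetric]
proof (rule Least_equality)
  show "\<exists>c. colouring X R 2 c" using assms(1) by blast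
next
  fix k assume "\<exists>c. colouring X R k c"
  then obtain c' where "c' x \<noteq> c' y" "c' x < k" "c' y < k"
    using assms(2-4) unfolding colouring_def by blast
  then show "2 \<le> k" by linarith
qed

lemma odd_cycle_not_2_colouring:
  assumes "has_cycle X R k" "odd k"
  shows "\<not> colouring X R 2 c"
proof
  assume c: "colouring X R 2 c"
  obtain xs where xs: "length xs = k" "set xs \<subseteq> X" "\<forall>i<k. R (xs ! i) (xs ! ((i + 1) mod k))"
    using assms(1) unfolding has_cycle_def by blast
  have step: "c (xs ! i) \<noteq> c (xs ! ((i + 1) mod k))" if "i < k" for i
    using c xs that unfolding colouring_def by (metis nth_mem subsetD mod_less_divisor gr_implies_not0 neq0_conv)
  have bound: "c (xs ! i) < 2" if "i < k" for i
    using c xs that unfolding colouring_def by (metis nth_mem subsetD)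
  have alternate: "c (xs ! i) = (c (xs ! 0) + i) mod 2" if "i < k" for i
    using that
  proof (induction i)
    case (Suc i)
    then have "c (xs ! Suc i) \<noteq> c (xs ! i)" using step[of i] by simp
    with Suc bound[of i] bound[of "Suc i"] show ?case by presburger
  qed (use bound in simp)
  obtain j where j: "k = 2 * j + 1" using assms(2) by (auto elim: oddE)
  then have "c (xs ! (k - 1)) = c (xs ! 0)"
    using alternate[of "k - 1"] bound[of 0] by simp
  moreover have "(k - 1 + 1) mod k = 0" using j by simp
  ultimately show False using step[of "k - 1"] j by simp
qed

lemma chromatic_number_odd_cycle:
  assumes "finite X" "\<And>x. x \<in> X \<Longrightarrow> \<not> R x x" "has_cycle X R k" "odd k"
  shows "chromatic_number X R \<noteq> 2"
proof
  assume "chromatic_number X R = 2"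
  moreover obtain c where "colouring X R (chromatic_number X R) c"
    using chromatic_number_colouring assms(1,2) by blast
  ultimately show False using odd_cycle_not_2_colouring[OF assms(3,4)] by simp
qed

section \<open>Connectivity\<close>

lemma comps_subset: "C \<in> comps E S \<Longrightarrow> C \<subseteq> S"
  unfolding comps_def by auto

lemma comps_cover: "a \<in> S \<Longrightarrow> \<exists>C\<in>comps E S. a \<in> C"
  unfolding comps_def by auto

lemma comps_empty [simp]: "comps E {} = {}"
  unfolding comps_def by auto

lemma comps_connected: "connected_in E S \<Longrightarrow> comps E S = {S}"
  unfolding comps_def connected_in_def by auto

lemma connected_in_singleton: "connected_in E {a}"
  unfolding connected_in_def by auto

lemma connected_in_insert:
  assumes "connected_in E S" "c \<in> S" "E c d" "E d c"
  shows "connected_in E (insert d S)"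
proof -
  let ?R = "rel_in E (insert d S)"
  have "rel_in E S \<subseteq> ?R" unfolding rel_in_def by auto
  then have inner: "(a, b) \<in> ?R\<^sup>*" if "a \<in> S" "b \<in> S" for a b
    using assms(1) that rtrancl_mono unfolding connected_in_def by blast
  have "(c, d) \<in> ?R\<^sup>*" "(d, c) \<in> ?R\<^sup>*" using assms unfolding rel_in_def by auto
  with inner assms(2) show ?thesis
    unfolding connected_in_def by (auto intro: rtrancl_trans)
qed

lemma connected_in_complete:
  assumes "complete_graph V E" "S \<subseteq> V" "S \<noteq> {}"
  shows "connected_in E S"
  unfolding connected_in_def
proof (intro conjI ballI)
  fix a b assume "a \<in> S" "b \<in> S"
  then show "(a, b) \<in> (rel_in E S)\<^sup>*"
    using assms unfolding complete_graph_def rel_in_def by (cases "a = b") (auto intro: r_into_rtrancl)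
qed (use assms in auto)

lemma rtrancl_leaves_set:
  "(a, b) \<in> R\<^sup>* \<Longrightarrow> a \<in> T \<Longrightarrow> b \<notin> T \<Longrightarrow> \<exists>c d. (c, d) \<in> R \<and> c \<in> T \<and> d \<notin> T"
  by (induction rule: rtrancl_induct) auto

text \<open>Grow T inside S one neighbour at a time; the last vertex added is not a cut vertex.\<close>

lemma exists_non_cut_vertex:
  assumes "finite S" "\<And>a b. E a b \<Longrightarrow> E b a"
    and "T \<subset> S" "connected_in E T" "connected_in E S"
  shows "\<exists>w\<in>S - T. connected_in E (S - {w})"
  using assms(3-)
proof (induction "card (S - T)" arbitrary: T rule: less_induct)
  case less
  obtain t s where "t \<in> T" "s \<in> S - T"
    using less.prems(1,2) unfolding connected_in_def by blast
  have "(t, s) \<in> (rel_in E S)\<^sup>*"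
    using less.prems(1,3) \<open>t \<in> T\<close> \<open>s \<in> S - T\<close> unfolding connected_in_def by blast
  then obtain c d where "(c, d) \<in> rel_in E S" "c \<in> T" "d \<notin> T"
    using rtrancl_leaves_set[of t s _ T] \<open>t \<in> T\<close> \<open>s \<in> S - T\<close> by blast
  then have d: "d \<in> S - T" "E c d" "E d c" using assms(2) unfolding rel_in_def by auto
  have conn: "connected_in E (insert d T)"
    using connected_in_insert[OF less.prems(2) \<open>c \<in> T\<close> d(2,3)] .
  show ?case
  proof (cases "insert d T = S")
    case True
    then have "S - {d} = T" using d(1) by auto
    then show ?thesis using less.prems(2) d(1) by auto
  next
    case False
    have "card (S - insert d T) < card (S - T)"
      using assms(1) d(1) by (metis Diff_insert card_Diff1_less finite_Diff)
    moreover have "insert d T \<subset> S" using less.prems(1) d(1) False by blast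
    ultimately obtain w where "w \<in> S - insert d T" "connected_in E (S - {w})"
      using less.hyps[of "insert d T"] conn less.prems(3) by blast
    then show ?thesis by blast
  qed
qed

lemma induced_path_exists:
  assumes "connected_in E V" "\<not> complete_graph V E"
  shows "\<exists>x y z. E x y \<and> E y z \<and> \<not> E x z \<and> x \<noteq> z"
proof -
  obtain a b where ab: "a \<in> V" "b \<in> V" "a \<noteq> b" "\<not> E a b"
    using assms(2) unfolding complete_graph_def by auto
  have "(a, b) \<in> (rel_in E V)\<^sup>*"
    using assms(1) ab unfolding connected_in_def by auto
  then show ?thesis
    using ab(3,4)
  proof (induction rule: rtrancl_induct)
    case (step c d)
    then have "E c d" unfolding rel_in_def by auto
    show ?case
    proof (cases "c = a \<or> E a c")
      case True
      with step \<open>E c d\<close> show ?thesis by blast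
    next
      case False
      with step.IH show ?thesis by blast
    qed
  qed simp
qed

section \<open>Search trees on induced subgraphs\<close>

definition st_set :: "('a \<Rightarrow> 'a \<Rightarrow> bool) \<Rightarrow> 'a set \<Rightarrow> 'a option \<Rightarrow> ('a \<Rightarrow> 'a option) set" where
  "st_set E S q = {p. st E S q p \<and> (\<forall>a. a \<notin> S \<longrightarrow> p a = None)}"

lemma rot_vertices_eq_st_set: "rot_vertices V E = st_set E V None"
  unfolding rot_vertices_def search_tree_def st_set_def by simp

lemma st_set_outside: "p \<in> st_set E S q \<Longrightarrow> a \<notin> S \<Longrightarrow> p a = None"
  unfolding st_set_def by blast

lemma st_singleton: "p r = q \<Longrightarrow> st E {r} q p"
  by (rule st.node[of r]) simp_all

lemma st_cong: "st E S q p \<Longrightarrow> (\<And>a. a \<in> S \<Longrightarrow> p a = p' a) \<Longrightarrow> st E S q p'"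
proof (induction rule: st.induct)
  case (node r S p q)
  show ?case
  proof (rule st.node[of r])
    show "\<forall>C\<in>comps E (S - {r}). st E C (Some r) p'"
      using node comps_subset by (metis Diff_subset subset_iff)
  qed (use node in auto)
qed

lemma st_parent_range: "st E S q p \<Longrightarrow> a \<in> S \<Longrightarrow> p a \<in> insert q (Some ` S)"
proof (induction arbitrary: a rule: st.induct)
  case (node r S p q)
  show ?case
  proof (cases "a = r")
    case False
    then obtain C where "C \<in> comps E (S - {r})" "a \<in> C"
      using node.prems comps_cover[of a "S - {r}" E] by blast
    with node.IH node.hyps(1) show ?thesis using comps_subset by fastforce
  qed (use node in simp)
qed

lemma finite_st_set:
  assumes "finite S"
  shows "finite (st_set E S q)"
proof -
  let ?F = "{p. \<forall>a. (a \<in> S \<longrightarrow> p a \<in> insert q (Some ` S)) \<and> (a \<notin> S \<longrightarrow> p a = None)}"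
  have "finite ?F" using assms by (intro finite_set_of_finite_funs) auto
  moreover have "st_set E S q \<subseteq> ?F" unfolding st_set_def by (auto dest: st_parent_range)
  ultimately show ?thesis by (rule finite_subset[rotated])
qed

lemma rot_adjI: "p \<noteq> p' \<Longrightarrow> p v = Some u \<Longrightarrow> p' = rotate E p u v \<Longrightarrow> rot_adj E p p'"
  unfolding rot_adj_def rotation_step_def by blast

lemma rot_adj_sym: "rot_adj E p p' \<Longrightarrow> rot_adj E p' p"
  unfolding rot_adj_def by blast

lemma rotate_fun_upd:
  assumes "p w = None" "w \<noteq> u" "w \<noteq> v" "q \<noteq> Some v"
    and "\<And>w0. q = Some w0 \<Longrightarrow> p w0 = None \<and> w0 \<noteq> w"
  shows "rotate E (p(w := q)) u v = (rotate E p u v)(w := q)"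
proof -
  let ?R = "{(a, b). p a = Some b}" and ?R' = "{(a, b). (p(w := q)) a = Some b}"
  \<comment> \<open>The only new edge leads from w to a vertex without parent, so no upward path to a vertex
    with a parent uses it.\<close>
  have "subtree (p(w := q)) a = subtree p a" if "p a = Some v" for a
  proof -
    have "?R \<subseteq> ?R'" using assms(1) by auto
    then have "subtree p a \<subseteq> subtree (p(w := q)) a"
      unfolding subtree_def using rtrancl_mono by blast
    moreover have "(c, a) \<in> ?R\<^sup>*" if "(c, a) \<in> ?R'\<^sup>*" for c
      using that
    proof (induction rule: converse_rtrancl_induct)
      case (step c d)
      show ?case
      proof (cases "c = w")
        case True
        then have "p d = None" "d \<noteq> w" using step.hyps(1) assms(5) by auto
        then have "d = a" using step.hyps(2) by (auto elim: converse_rtranclE)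
        then show ?thesis using \<open>p d = None\<close> \<open>p a = Some v\<close> by simp
      qed (use step in \<open>auto intro: converse_rtrancl_into_rtrancl\<close>)
    qed simp
    ultimately show ?thesis unfolding subtree_def by auto
  qed
  then show ?thesis
    unfolding rotate_def using assms(1-4) by (auto intro!: ext)
qed

lemma rotation_step_add_root:
  assumes "w \<in> S" "q \<notin> Some ` S"
    and p: "p \<in> st_set E (S - {w}) (Some w)" and p': "p' \<in> st_set E (S - {w}) (Some w)"
    and "rotation_step E p p'"
  shows "rotation_step E (p(w := q)) (p'(w := q))"
proof -
  obtain u v where uv: "p v = Some u" "p' = rotate E p u v"
    using assms(5) unfolding rotation_step_def by blast
  have "v \<in> S - {w}" using st_set_outside[OF p] uv(1) by fastforce
  moreover have "u \<in> S - {w}"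
    using st_set_outside[OF p', of u] uv(2) unfolding rotate_def by fastforce
  ultimately have "rotate E (p(w := q)) u v = p'(w := q)"
    unfolding uv(2) using assms(1,2) st_set_outside[OF p]
    by (intro rotate_fun_upd) auto
  moreover have "(p(w := q)) v = Some u" using uv(1) \<open>v \<in> S - {w}\<close> by simp
  ultimately show ?thesis unfolding rotation_step_def by metis
qed

lemma inj_on_fun_upd_None: "inj_on (\<lambda>p. p(w := y)) {p. p w = None}"
proof (rule inj_onI)
  fix p p' assume "p \<in> {p. p w = None}" "p' \<in> {p. p w = None}" "p(w := y) = p'(w := y)"
  then have "(p(w := y))(w := None) = (p'(w := y))(w := None)" "p w = None" "p' w = None" by simp_all
  then show "p = p'" by (simp add: fun_upd_idem)
qed

lemma rot_adj_add_root:
  assumes "w \<in> S" "q \<notin> Some ` S"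
    and p: "p \<in> st_set E (S - {w}) (Some w)" and p': "p' \<in> st_set E (S - {w}) (Some w)"
    and "rot_adj E p p'"
  shows "rot_adj E (p(w := q)) (p'(w := q))"
proof -
  have "p w = None" "p' w = None" by (simp_all add: st_set_outside[OF p] st_set_outside[OF p'])
  with \<open>rot_adj E p p'\<close> have "p(w := q) \<noteq> p'(w := q)"
    using inj_on_fun_upd_None[of w q] unfolding rot_adj_def inj_on_def by blast
  moreover have "rotation_step E p p' \<or> rotation_step E p' p"
    using \<open>rot_adj E p p'\<close> unfolding rot_adj_def by blast
  then have "rotation_step E (p(w := q)) (p'(w := q)) \<or> rotation_step E (p'(w := q)) (p(w := q))"
    using rotation_step_add_root[OF assms(1,2) p p'] rotation_step_add_root[OF assms(1,2) p' p] by blast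
  ultimately show ?thesis unfolding rot_adj_def by blast
qed

lemma st_set_add_root:
  assumes "w \<in> S" "connected_in E (S - {w})" "p \<in> st_set E (S - {w}) (Some w)"
  shows "p(w := q) \<in> st_set E S q"
proof -
  have "st E (S - {w}) (Some w) p" using assms(3) unfolding st_set_def by blast
  then have "st E (S - {w}) (Some w) (p(w := q))" by (rule st_cong) simp
  with assms(1,2) have "st E S q (p(w := q))"
    by (intro st.node[of w]) (simp_all add: comps_connected)
  moreover have "a \<notin> S \<Longrightarrow> (p(w := q)) a = None" for a
    using assms(1) st_set_outside[OF assms(3)] by auto
  ultimately show ?thesis unfolding st_set_def by blast
qed

lemma has_cycle_image:
  assumes "has_cycle X R k" "inj_on f X" "f ` X \<subseteq> Y"
    and "\<And>x y. x \<in> X \<Longrightarrow> y \<in> X \<Longrightarrow> R x y \<Longrightarrow> R' (f x) (f y)"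
  shows "has_cycle Y R' k"
proof -
  obtain xs where xs: "length xs = k" "distinct xs" "set xs \<subseteq> X"
    "\<forall>i<k. R (xs ! i) (xs ! ((i + 1) mod k))"
    using assms(1) unfolding has_cycle_def by blast
  have "\<forall>i<k. R' (map f xs ! i) (map f xs ! ((i + 1) mod k))"
    using xs assms(4) by (metis length_map mod_less_divisor not_gr_zero not_less0 nth_map nth_mem subsetD)
  moreover have "distinct (map f xs)" using xs assms(2) by (simp add: distinct_map inj_on_subset)
  moreover have "set (map f xs) \<subseteq> Y" using xs(3) assms(3) by auto
  ultimately show ?thesis
    unfolding has_cycle_def using xs(1) by (intro exI[of _ "map f xs"]) auto
qed

lemma has_cycle_st_set_mono:
  assumes "finite S" "\<And>a b. E a b \<Longrightarrow> E b a"
    and "T \<subseteq> S" "connected_in E T" "connected_in E S"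
    and cycle_T: "\<And>q. q \<notin> Some ` T \<Longrightarrow> has_cycle (st_set E T q) (rot_adj E) k"
  shows "q \<notin> Some ` S \<Longrightarrow> has_cycle (st_set E S q) (rot_adj E) k"
  using assms(1,3,5)
proof (induction "card S" arbitrary: S q rule: less_induct)
  case less
  show ?case
  proof (cases "T = S")
    case True
    then show ?thesis using cycle_T less.prems(1) by blast
  next
    case False
    with less.prems(3) obtain w where w: "w \<in> S - T" "connected_in E (S - {w})"
      using exists_non_cut_vertex[OF less.prems(2) assms(2) _ assms(4) less.prems(4)] by blast
    let ?X = "st_set E (S - {w}) (Some w)"
    have "card (S - {w}) < card S" using less.prems(2) w(1) by (meson DiffD1 card_Diff1_less)
    moreover have "T \<subseteq> S - {w}" using less.prems(3) w(1) by blast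
    ultimately have cycle: "has_cycle ?X (rot_adj E) k"
      using less.hyps[of "S - {w}" "Some w"] less.prems(2) w(2) by blast
    have "?X \<subseteq> {p. p w = None}" by (auto intro: st_set_outside)
    then have inj: "inj_on (\<lambda>p. p(w := q)) ?X" by (rule inj_on_subset[OF inj_on_fun_upd_None])
    have "w \<in> S" using w(1) by blast
    then have image: "(\<lambda>p. p(w := q)) ` ?X \<subseteq> st_set E S q"
      using st_set_add_root[OF _ w(2)] by blast
    have adj: "\<And>p p'. p \<in> ?X \<Longrightarrow> p' \<in> ?X \<Longrightarrow> rot_adj E p p' \<Longrightarrow>
        rot_adj E (p(w := q)) (p'(w := q))"
      by (rule rot_adj_add_root[OF \<open>w \<in> S\<close> less.prems(1)])
    show ?thesis
      using has_cycle_image[OF cycle inj image] adj by blast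
  qed
qed

section \<open>Search trees that are paths\<close>

primrec path_tree :: "'a option \<Rightarrow> 'a list \<Rightarrow> 'a \<Rightarrow> 'a option" where
  "path_tree q [] = (\<lambda>_. None)"
| "path_tree q (a # xs) = (path_tree (Some a) xs)(a := q)"

lemma path_tree_notin: "a \<notin> set xs \<Longrightarrow> path_tree q xs a = None"
  by (induction xs arbitrary: q) auto

lemma path_tree_append:
  "path_tree q (A @ ys) a =
     (if a \<in> set A then path_tree q A a else path_tree (last (q # map Some A)) ys a)"
  by (induction A arbitrary: q) auto

lemma path_tree_range: "a \<in> set xs \<Longrightarrow> path_tree q xs a \<in> insert q (Some ` set xs)"
  by (induction xs arbitrary: q) auto

lemma path_tree_in_st_set:
  assumes "distinct xs" "xs \<noteq> []"
    and "\<And>i. 0 < i \<Longrightarrow> i < length xs \<Longrightarrow> connected_in E (set (drop i xs))"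
  shows "path_tree q xs \<in> st_set E (set xs) q"
proof -
  have "st E (set xs) q (path_tree q xs)"
    using assms
  proof (induction xs arbitrary: q)
    case (Cons a ys)
    have st_ys: "st E (set ys) (Some a) (path_tree q (a # ys))" if "ys \<noteq> []"
    proof (rule st_cong)
      have "connected_in E (set (drop i ys))" if "0 < i" "i < length ys" for i
        using Cons.prems(3)[of "Suc i"] that by simp
      then show "st E (set ys) (Some a) (path_tree (Some a) ys)"
        using Cons.IH[of "Some a"] Cons.prems(1) \<open>ys \<noteq> []\<close> by simp
    qed (use Cons.prems in auto)
    have "comps E (set ys) = {set ys}" if "ys \<noteq> []"
      using Cons.prems(3)[of 1] that by (simp add: comps_connected)
    moreover have "set (a # ys) - {a} = set ys" using Cons.prems(1) by auto
    ultimately have "\<forall>C\<in>comps E (set (a # ys) - {a}). st E C (Some a) (path_tree q (a # ys))"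
      using st_ys by (cases "ys = []") simp_all
    then show ?case by (rule st.node[rotated 2]) simp_all
  qed simp
  then show ?thesis unfolding st_set_def by (simp add: path_tree_notin)
qed

lemma path_tree_inj:
  assumes "path_tree q xs = path_tree q ys" "distinct xs" "distinct ys" "set xs = set ys"
    and "q \<notin> Some ` set xs"
  shows "xs = ys"
  using assms
proof (induction xs arbitrary: ys q)
  case Nil
  then show ?case by simp
next
  case (Cons a xs)
  then obtain b ys' where ys: "ys = b # ys'" by (cases ys) auto
  have "a = b"
  proof (rule ccontr)
    assume "a \<noteq> b"
    then have "b \<in> set xs" using Cons.prems(4) ys by auto
    then have "path_tree q (a # xs) b \<in> Some ` set (a # xs)"
      using \<open>a \<noteq> b\<close> path_tree_range[of b xs "Some a"] by auto
    moreover have "path_tree q (a # xs) b = path_tree q ys b" by (rule fun_cong[OF Cons.prems(1)])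
    ultimately show False using Cons.prems(5) ys by simp
  qed
  have "path_tree (Some a) xs = path_tree (Some a) ys'"
  proof
    fix c show "path_tree (Some a) xs c = path_tree (Some a) ys' c"
      using fun_cong[OF Cons.prems(1), of c] Cons.prems(2,3) ys \<open>a = b\<close>
      by (cases "c = a") (simp_all add: path_tree_notin)
  qed
  moreover have "set xs = set ys'" using Cons.prems(2-4) ys \<open>a = b\<close> by auto
  ultimately have "xs = ys'"
    using Cons.IH[of "Some a" ys'] Cons.prems(2,3) ys by auto
  with ys \<open>a = b\<close> show ?case by simp
qed

lemma path_tree_eq_Some:
  assumes "path_tree q xs v = Some u" "q \<noteq> Some u"
  shows "\<exists>A B. xs = A @ u # v # B"
proof -
  have "v \<in> set xs" using assms(1) path_tree_notin by fastforce
  then obtain A B where xs: "xs = A @ v # B" "v \<notin> set A" by (blast dest: split_list_first)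
  then have "last (q # map Some A) = Some u" using assms(1) by (simp add: path_tree_append)
  moreover from this assms(2) have "A \<noteq> []" by auto
  ultimately have "A \<noteq> []" "last A = u" by (simp_all add: last_map)
  then have "A = butlast A @ [u]" by (metis append_butlast_last_id)
  with xs show ?thesis by (metis append.assoc append_Cons append_Nil)
qed

text \<open>The hypothesis on hd B keeps the rest of the path attached to u after the rotation.\<close>

lemma rotate_path_tree:
  assumes "distinct (A @ u # v # B)" "q \<noteq> Some v" "B \<noteq> [] \<Longrightarrow> E u (hd B)"
  shows "rotate E (path_tree q (A @ u # v # B)) u v = path_tree q (A @ v # u # B)"
proof
  fix a
  let ?p = "path_tree q (A @ u # v # B)" and ?q = "last (q # map Some A)"
  have u: "u \<notin> set A" "u \<noteq> v" "u \<notin> set B" and v: "v \<notin> set A" "v \<notin> set B"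
    using assms(1) by auto
  have pu: "?p u = ?q" using u by (simp add: path_tree_append)
  consider (A) "a \<in> set A" | (u) "a = u" | (v) "a = v" | (hd) b B' where "B = b # B'" "a = b"
    | (rest) "a \<notin> set A" "a \<noteq> u" "a \<noteq> v" "\<And>b B'. B = b # B' \<Longrightarrow> a \<noteq> b"
    by (cases B) auto
  then show "rotate E ?p u v a = path_tree q (A @ v # u # B) a"
  proof cases
    case A
    then have "?p a \<noteq> Some v"
      using path_tree_range[OF A, of q] assms(2) v by (auto simp: path_tree_append)
    then show ?thesis using A u v unfolding rotate_def by (auto simp: path_tree_append)
  next
    case hd
    have "a \<in> subtree ?p a" unfolding subtree_def by simp
    moreover have "E u a" using assms(3) hd by simp
    moreover have "?p a = Some v" using hd u v assms(1) by (auto simp: path_tree_append)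
    ultimately show ?thesis using hd u v assms(1) unfolding rotate_def
      by (auto simp: path_tree_append)
  next
    case rest
    have "?p a \<noteq> Some v"
    proof (cases B)
      case (Cons b B')
      show ?thesis
      proof (cases "a \<in> set B'")
        case True
        then show ?thesis using path_tree_range[OF True, of "Some b"] rest Cons v
          by (auto simp: path_tree_append)
      qed (use rest Cons in \<open>auto simp: path_tree_append path_tree_notin\<close>)
    qed (use rest in \<open>auto simp: path_tree_append\<close>)
    moreover have "path_tree (Some v) B a = path_tree (Some u) B a"
      using rest by (cases B) auto
    ultimately show ?thesis using rest unfolding rotate_def by (auto simp: path_tree_append)
  qed (use u v pu in \<open>auto simp: rotate_def path_tree_append\<close>)
qed

section \<open>Complete graphs\<close>

lemma st_complete_graph_path_tree:
  assumes "complete_graph V E" "st E S q p" "S \<subseteq> V"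
  shows "\<exists>xs. distinct xs \<and> set xs = S \<and> (\<forall>a\<in>S. p a = path_tree q xs a)"
  using assms(2,3)
proof (induction rule: st.induct)
  case (node r S p q)
  show ?case
  proof (cases "S = {r}")
    case True
    then show ?thesis using node.hyps(2) by (intro exI[of _ "[r]"]) auto
  next
    case False
    then have "connected_in E (S - {r})"
      using connected_in_complete[OF assms(1), of "S - {r}"] node.hyps(1) node.prems by blast
    then have "comps E (S - {r}) = {S - {r}}" by (rule comps_connected)
    then obtain ys where "distinct ys" "set ys = S - {r}" "\<forall>a\<in>S - {r}. p a = path_tree (Some r) ys a"
      using node.IH node.prems by auto
    then show ?thesis using node.hyps(1,2) by (intro exI[of _ "r # ys"]) auto
  qed
qed

lemma st_set_complete_graph:
  assumes "complete_graph V E" "S \<subseteq> V" "p \<in> st_set E S q"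
  shows "\<exists>xs. distinct xs \<and> set xs = S \<and> p = path_tree q xs"
proof -
  obtain xs where xs: "distinct xs" "set xs = S" "\<forall>a\<in>S. p a = path_tree q xs a"
    using st_complete_graph_path_tree[OF assms(1) _ assms(2)] assms(3) unfolding st_set_def by blast
  moreover have "p a = path_tree q xs a" for a
    using xs st_set_outside[OF assms(3), of a] by (cases "a \<in> S") (auto simp: path_tree_notin)
  then have "p = path_tree q xs" by blast
  ultimately show ?thesis by blast
qed

lemma path_tree_in_st_set_complete:
  assumes "complete_graph V E" "distinct xs" "xs \<noteq> []" "set xs \<subseteq> V"
  shows "path_tree q xs \<in> st_set E (set xs) q"
proof (rule path_tree_in_st_set[OF assms(2,3)])
  fix i assume "i < length xs"
  then show "connected_in E (set (drop i xs))"
    using assms(4) set_drop_subset[of i xs] by (intro connected_in_complete[OF assms(1)]) auto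
qed

lemma rotation_step_complete_graph:
  assumes "complete_graph V E" "distinct xs" "set xs \<subseteq> V"
    and "rotation_step E (path_tree None xs) p'"
  shows "\<exists>A u v B. xs = A @ u # v # B \<and> p' = path_tree None (A @ v # u # B)"
proof -
  obtain u v where uv: "path_tree None xs v = Some u" "p' = rotate E (path_tree None xs) u v"
    using assms(4) unfolding rotation_step_def by blast
  then obtain A B where xs: "xs = A @ u # v # B" using path_tree_eq_Some by fastforce
  have "E u (hd B)" if "B \<noteq> []"
    using assms(1-3) that xs unfolding complete_graph_def by (cases B) auto
  then have "p' = path_tree None (A @ v # u # B)"
    using uv(2) rotate_path_tree[of A u v B None E] assms(2) xs by simp
  with xs show ?thesis by blast
qed

fun inversions :: "('a \<Rightarrow> 'b::linorder) \<Rightarrow> 'a list \<Rightarrow> nat" where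
  "inversions f [] = 0"
| "inversions f (a # xs) = length (filter (\<lambda>b. f b < f a) xs) + inversions f xs"

lemma odd_inversions_swap:
  "f u \<noteq> f v \<Longrightarrow> odd (inversions f (A @ u # v # B) + inversions f (A @ v # u # B))"
proof (induction A)
  case Nil
  then show ?case by (auto simp: not_less_iff_gr_or_eq)
qed simp

definition path_parity :: "'a set \<Rightarrow> ('a \<Rightarrow> 'b::linorder) \<Rightarrow> ('a \<Rightarrow> 'a option) \<Rightarrow> nat" where
  "path_parity V f p = inversions f (SOME xs. distinct xs \<and> set xs = V \<and> p = path_tree None xs) mod 2"

lemma path_parity_path_tree:
  assumes "distinct xs"
  shows "path_parity (set xs) f (path_tree None xs) = inversions f xs mod 2"
proof -
  let ?P = "\<lambda>ys. distinct ys \<and> set ys = set xs \<and> path_tree None xs = path_tree None ys"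
  have "?P (SOME ys. ?P ys)" using assms by (intro someI[of ?P xs]) auto
  then have some: "xs = (SOME ys. ?P ys)" using path_tree_inj[of None xs] assms by auto
  show ?thesis unfolding path_parity_def by (simp flip: some)
qed

lemma path_parity_colouring:
  assumes "complete_graph V E" "inj_on f V"
  shows "colouring (st_set E V None) (rot_adj E) 2 (path_parity V f)"
proof -
  have differ: "path_parity V f p \<noteq> path_parity V f p'"
    if p: "p \<in> st_set E V None" and step: "rotation_step E p p'" for p p'
  proof -
    obtain xs where xs: "distinct xs" "set xs = V" "p = path_tree None xs"
      using st_set_complete_graph[OF assms(1) order_refl p] by blast
    then obtain A u v B where AB: "xs = A @ u # v # B" "p' = path_tree None (A @ v # u # B)"
      using rotation_step_complete_graph[OF assms(1), of xs p'] step by blast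
    have "f u \<noteq> f v" using assms(2) xs(1,2) AB(1) by (auto dest: inj_onD)
    then have "odd (inversions f xs + inversions f (A @ v # u # B))"
      using odd_inversions_swap AB(1) by metis
    moreover have "path_parity V f p = inversions f xs mod 2"
      using path_parity_path_tree xs by blast
    moreover have "distinct (A @ v # u # B)" "set (A @ v # u # B) = V" using xs AB(1) by auto
    then have "path_parity V f p' = inversions f (A @ v # u # B) mod 2"
      using path_parity_path_tree[of "A @ v # u # B" f] AB(2) by simp
    ultimately show ?thesis by (simp add: odd_add mod2_eq_if split: if_splits)
  qed
  moreover have "path_parity V f p < 2" for p by (simp add: path_parity_def)
  ultimately show ?thesis
    unfolding colouring_def rot_adj_def by metis
qed

lemma rot_adj_exists_complete_graph:
  assumes "complete_graph V E" "finite V" "card V \<ge> 2"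
  shows "\<exists>p\<in>st_set E V None. \<exists>p'\<in>st_set E V None. rot_adj E p p'"
proof -
  obtain xs where xs: "distinct xs" "set xs = V" using finite_distinct_list[OF assms(2)] by blast
  with assms(3) obtain a b ys where abys: "xs = a # b # ys"
    by (metis distinct_card le_antisym length_0_conv length_Cons not_less_eq_eq numeral_2_eq_2 zero_le neq_Nil_conv)
  let ?p = "path_tree None xs" and ?p' = "path_tree None (b # a # ys)"
  have "?p' = rotate E ?p a b"
    using rotate_path_tree[of "[]" a b ys None E] xs assms(1) abys
    unfolding complete_graph_def by (cases ys) auto
  moreover have "?p b = Some a" "?p \<noteq> ?p'" using xs(1) abys by (auto dest: fun_cong[of _ _ a])
  moreover have "xs \<noteq> []" "set xs \<subseteq> V" using xs(2) abys by auto
  then have "?p \<in> st_set E V None"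
    using path_tree_in_st_set_complete[OF assms(1) xs(1), of None] xs(2) by simp
  moreover have "distinct (b # a # ys)" "set (b # a # ys) = V" using xs abys by auto
  then have "?p' \<in> st_set E V None"
    using path_tree_in_st_set_complete[OF assms(1), of "b # a # ys" None] by simp
  ultimately show ?thesis using rot_adjI by metis
qed

section \<open>Graphs that are not complete\<close>

lemma st_star:
  assumes "\<not> E x z" "\<not> E z x" "x \<noteq> y" "x \<noteq> z" "y \<noteq> z"
    and "p y = q" "p x = Some y" "p z = Some y"
  shows "st E {x, y, z} q p"
proof (rule st.node[of y])
  have "a = b" if "(a, b) \<in> (rel_in E {x, z})\<^sup>*" for a b
    using that by induction (use assms(1,2) in \<open>auto simp: rel_in_def\<close>)
  then have "comps E {x, z} = {{x}, {z}}" unfolding comps_def by auto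
  moreover have "{x, y, z} - {y} = {x, z}" using assms(3,5) by auto
  ultimately show "\<forall>C\<in>comps E ({x, y, z} - {y}). st E C (Some y) p"
    using st_singleton[of p x] st_singleton[of p z] assms(7,8) by simp
qed (use assms(6) in simp_all)

lemma path_tree_3_in_st_set:
  assumes "E b c" "E c b" "distinct [a, b, c]"
  shows "path_tree q [a, b, c] \<in> st_set E {a, b, c} q"
proof -
  have "connected_in E {b, c}"
    using connected_in_insert[OF connected_in_singleton[of E c], of c b] assms(1,2) by simp
  then have "connected_in E (set (drop i [a, b, c]))" if "0 < i" "i < 3" for i
    using that connected_in_singleton[of E c] by (cases "i = 1") (auto simp: numeral_eq_Suc less_Suc_eq)
  then show ?thesis using path_tree_in_st_set[OF assms(3), of E q] by simp
qed

lemma has_cycle_5I: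
  assumes "distinct [a, b, c, d, e]" "{a, b, c, d, e} \<subseteq> X"
    and "R a b" "R b c" "R c d" "R d e" "R e a"
  shows "has_cycle X R 5"
  unfolding has_cycle_def
proof (intro exI[of _ "[a, b, c, d, e]"] conjI allI impI)
  fix i :: nat assume "i < 5"
  then consider "i = 0" | "i = 1" | "i = 2" | "i = 3" | "i = 4" by linarith
  then show "R ([a, b, c, d, e] ! i) ([a, b, c, d, e] ! ((i + 1) mod 5))"
    by cases (use assms in simp_all)
qed (use assms in simp_all)

text \<open>These are all the search trees on the path x - y - z, so its rotation graph is a 5-cycle.\<close>

lemma has_cycle_st_set_induced_path:
  assumes "\<And>a b. E a b \<Longrightarrow> E b a"
    and "E x y" "E y z" "\<not> E x z" "x \<noteq> y" "y \<noteq> z" "x \<noteq> z" "q \<notin> Some ` {x, y, z}"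
  shows "has_cycle (st_set E {x, y, z} q) (rot_adj E) 5"
proof -
  have yx: "E y x" and zy: "E z y" and zx: "\<not> E z x" using assms(1-4) by blast+
  have q: "q \<noteq> Some x" "q \<noteq> Some y" "q \<noteq> Some z" using assms(8) by auto
  note neq = assms(5-7) assms(5-7)[symmetric] q q[symmetric]
  define star where "star = (\<lambda>_. None)(y := q, x := Some y, z := Some y)"
  let ?p2 = "path_tree q [x, y, z]" and ?p3 = "path_tree q [x, z, y]"
    and ?p4 = "path_tree q [z, x, y]" and ?p5 = "path_tree q [z, y, x]"
  have "{x, z, y} = {x, y, z}" "{z, x, y} = {x, y, z}" "{z, y, x} = {x, y, z}" by auto
  then have "?p2 \<in> st_set E {x, y, z} q" "?p3 \<in> st_set E {x, y, z} q"
    "?p4 \<in> st_set E {x, y, z} q" "?p5 \<in> st_set E {x, y, z} q"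
    using path_tree_3_in_st_set[of E y z x q] path_tree_3_in_st_set[of E z y x q]
      path_tree_3_in_st_set[of E x y z q] path_tree_3_in_st_set[of E y x z q]
      assms(2-7) yx zy by auto
  moreover have "st E {x, y, z} q star"
    by (rule st_star) (use assms(4-7) zx in \<open>simp_all add: star_def\<close>)
  then have "star \<in> st_set E {x, y, z} q" unfolding st_set_def star_def by auto
  ultimately have trees: "{star, ?p2, ?p3, ?p4, ?p5} \<subseteq> st_set E {x, y, z} q" by blast
  have "distinct (map (\<lambda>p. (p x, p z)) [star, ?p2, ?p3, ?p4, ?p5])"
    unfolding star_def using neq by auto
  then have distinct: "distinct [star, ?p2, ?p3, ?p4, ?p5]" unfolding distinct_map by blast
  have "?p2 = rotate E star y x" "star x = Some y"
    unfolding star_def rotate_def using neq by (auto intro!: ext)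
  then have 12: "rot_adj E star ?p2" using distinct by (metis rot_adjI distinct_length_2_or_more)
  have "?p5 = rotate E star y z" "star z = Some y"
    unfolding star_def rotate_def using neq by (auto intro!: ext)
  then have 51: "rot_adj E ?p5 star" using distinct by (metis rot_adjI rot_adj_sym distinct_length_2_or_more)
  have "?p3 = rotate E ?p2 y z" "?p2 z = Some y"
    using rotate_path_tree[of "[x]" y z "[]" q E] neq by auto
  then have 23: "rot_adj E ?p2 ?p3" using distinct by (metis rot_adjI distinct_length_2_or_more)
  have "?p4 = rotate E ?p3 x z" "?p3 z = Some x"
    using rotate_path_tree[of "[]" x z "[y]" q E] assms(2) neq by auto
  then have 34: "rot_adj E ?p3 ?p4" using distinct by (metis rot_adjI distinct_length_2_or_more)
  have "?p5 = rotate E ?p4 x y" "?p4 y = Some x"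
    using rotate_path_tree[of "[z]" x y "[]" q E] neq by auto
  then have 45: "rot_adj E ?p4 ?p5" using distinct by (metis rot_adjI distinct_length_2_or_more)
  show ?thesis by (rule has_cycle_5I[where R = "rot_adj E", OF distinct trees 12 23 34 45 51])
qed

lemma rot_vertices_has_cycle_5:
  assumes "simple_graph V E" "connected_in E V" "\<not> complete_graph V E"
  shows "has_cycle (rot_vertices V E) (rot_adj E) 5"
proof -
  obtain x y z where path: "E x y" "E y z" "\<not> E x z" "x \<noteq> z"
    using induced_path_exists[OF assms(2,3)] by blast
  have sym: "\<And>a b. E a b \<Longrightarrow> E b a" and "finite V"
    and in_V: "\<And>a b. E a b \<Longrightarrow> a \<in> V \<and> b \<in> V" and "x \<noteq> y" "y \<noteq> z" using assms(1) path unfolding simple_graph_def by metis+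
  have "connected_in E {x, y}"
    using connected_in_insert[OF connected_in_singleton[of E y], of y x] path(1) sym by simp
  then have "connected_in E (insert z {x, y})"
    using connected_in_insert[of E "{x, y}" y z] path(2) sym by simp
  then have "connected_in E {x, y, z}" by (simp add: insert_commute)
  moreover have "{x, y, z} \<subseteq> V" using in_V path by auto
  moreover note has_cycle_st_set_induced_path[OF sym path(1-3) \<open>x \<noteq> y\<close> \<open>y \<noteq> z\<close> path(4)]
  ultimately show ?thesis
    unfolding rot_vertices_eq_st_set
    using has_cycle_st_set_mono[OF \<open>finite V\<close> sym _ _ assms(2), of "{x, y, z}" 5 None] by simp
qed

theorem lemma3p1:
  fixes V :: "'a set" and E :: "'a \<Rightarrow> 'a \<Rightarrow> bool"
  assumes "simple_graph V E" and "connected_in E V" and "card V \<ge> 3"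
  shows "(complete_graph V E \<longleftrightarrow> chromatic_number (rot_vertices V E) (rot_adj E) = 2)
       \<and> (chromatic_number (rot_vertices V E) (rot_adj E) = 2
            \<longleftrightarrow> \<not> has_cycle (rot_vertices V E) (rot_adj E) 5)"
proof -
  let ?X = "rot_vertices V E" and ?R = "rot_adj E"
  have "finite V" using assms(1) unfolding simple_graph_def by blast
  show ?thesis
  proof (cases "complete_graph V E")
    case True
    obtain f :: "'a \<Rightarrow> nat" where "inj_on f V"
      using finite_imp_inj_to_nat_seg[OF \<open>finite V\<close>] by blast
    then have colouring: "colouring ?X ?R 2 (path_parity V f)"
      unfolding rot_vertices_eq_st_set by (rule path_parity_colouring[OF True])
    obtain p p' where "p \<in> ?X" "p' \<in> ?X" "?R p p'"
      using rot_adj_exists_complete_graph[OF True \<open>finite V\<close>] assms(3)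
      unfolding rot_vertices_eq_st_set by fastforce
    then have "chromatic_number ?X ?R = 2" by (rule chromatic_number_eq_2[OF colouring])
    with True colouring show ?thesis using odd_cycle_not_2_colouring[of ?X ?R 5] by auto
  next
    case False
    have "finite ?X" using finite_st_set[OF \<open>finite V\<close>] unfolding rot_vertices_eq_st_set .
    moreover have "\<And>p. p \<in> ?X \<Longrightarrow> \<not> ?R p p" by (simp add: rot_adj_def)
    moreover have "has_cycle ?X ?R 5" by (rule rot_vertices_has_cycle_5[OF assms(1,2) False])
    ultimately have "chromatic_number ?X ?R \<noteq> 2" by (rule chromatic_number_odd_cycle) auto
    with False \<open>has_cycle ?X ?R 5\<close> show ?thesis by blast
  qed
qed

end
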